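(* Let $S$ be a right non-degenerate semigroup of skew type with generating set $X$. Then for every $y_1\in X$ and every $m\ge 2$, the map $f_{y_1}:X^{m-1}\to X^{m-1}$ is injective.
   Context: A semigroup of skew type is a monoid $S$ with a monoid presentation $S=\langle x_1,\ldots,x_n \mid x_ix_j=x_kx_l\rangle$ consisting of $\binom{n}{2}$ relations, each of the form $x_ix_j=x_kx_l$ with $i\neq j$, $k\neq l$, such that every word $x_px_q$ with $p\neq q$ appears (as one side) in exactly one of the relations; $X=\{x_1,\ldots,x_n\}$. For $a,b\in X$ define the partner $\overline{a}\,\overline{b}$ of the word $ab$: if $a\neq b$, it is the other side of the unique defining relation containing $ab$; if $a=b$, it is $ab$ itself. $S$ is right non-degenerate if for every $x\in X$ the map $X\to X$ sending $y$ to the first letter of the partner of $xy$ is surjective (equivalently: for every $x,z\in X$ there is a relation $xy=zt$, allowing the trivial one $xx=xx$). Let $Y$ be the free monoid on $X$ and $X^{m-1}\subseteq Y$ the set of words of length $m-1$. For $m\ge2$ and $y_1,\ldots,y_m\in X$, define $g_i(y_1\cdots y_m)=y_1\cdots y_{i-1}\overline{y}_i\overline{y}_{i+1}y_{i+2}\cdots y_m$ for $1\le i\le m-1$, where $\overline{y}_i\overline{y}_{i+1}$ is the partner of $y_iy_{i+1}$, and $g(y_1\cdots y_m)=g_{m-1}\cdots g_2g_1(y_1\cdots y_m)$. If $g(y_1\cdots y_m)=s_1\cdots s_m$ with $s_i\in X$, set $f_{y_1}(y_2\cdots y_m)=s_1\cdots s_{m-1}$. *)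

theory Defs
  imports Main
begin

text \<open>A monoid presentation of skew type over the (finite) generating set X is
given by its set R of defining relations; a relation x_i x_j = x_k x_l is the pair
((x_i,x_j),(x_k,x_l)) of two-letter words.\<close>

definition skew_type :: "'a set \<Rightarrow> (('a \<times> 'a) \<times> ('a \<times> 'a)) set \<Rightarrow> bool" where
  "skew_type X R \<longleftrightarrow> finite X \<and> finite R \<and> card R = (card X choose 2)
     \<and> (\<forall>((i,j),(k,l))\<in>R. i \<in> X \<and> j \<in> X \<and> k \<in> X \<and> l \<in> X \<and> i \<noteq> j \<and> k \<noteq> l)
     \<and> (\<forall>p\<in>X. \<forall>q\<in>X. p \<noteq> q \<longrightarrow> (\<exists>!r\<in>R. fst r = (p,q) \<or> snd r = (p,q)))"

definition partner :: "(('a \<times> 'a) \<times> ('a \<times> 'a)) set \<Rightarrow> 'a \<times> 'a \<Rightarrow> 'a \<times> 'a" where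
  "partner R w = (if fst w = snd w then w
     else (THE v. (w, v) \<in> R \<or> (v, w) \<in> R))"

definition right_nondegenerate :: "'a set \<Rightarrow> (('a \<times> 'a) \<times> ('a \<times> 'a)) set \<Rightarrow> bool" where
  "right_nondegenerate X R \<longleftrightarrow> (\<forall>x\<in>X. (\<lambda>y. fst (partner R (x, y))) ` X = X)"

text \<open>g_i (1-based index i, 1 \<le> i \<le> m-1) replaces letters i, i+1 by the partner.\<close>
definition gstep :: "(('a \<times> 'a) \<times> ('a \<times> 'a)) set \<Rightarrow> nat \<Rightarrow> 'a list \<Rightarrow> 'a list" where
  "gstep R i ys = (let (a, b) = partner R (ys ! (i - 1), ys ! i) in ys[i - 1 := a, i := b])"

definition gmap :: "(('a \<times> 'a) \<times> ('a \<times> 'a)) set \<Rightarrow> 'a list \<Rightarrow> 'a list" where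
  "gmap R ys = foldl (\<lambda>w i. gstep R i w) ys [1..<length ys]"

definition fmap :: "(('a \<times> 'a) \<times> ('a \<times> 'a)) set \<Rightarrow> 'a \<Rightarrow> 'a list \<Rightarrow> 'a list" where
  "fmap R y ws = butlast (gmap R (y # ws))"

end

theory Submission
  imports Defs
begin

text \<open>Applying \<open>g = g\<^sub>m\<^sub>-\<^sub>1 \<circ> \<dots> \<circ> g\<^sub>1\<close> to \<open>x y\<^sub>2 \<dots> y\<^sub>m\<close> carries a letter from left to right:
when the carried letter \<open>x\<close> meets the next letter \<open>y\<close>, the partner \<open>x' x''\<close> of \<open>x y\<close>
leaves \<open>x'\<close> behind and \<open>x''\<close> is carried on. Hence \<open>f\<^sub>x(y\<^sub>2 \<dots> y\<^sub>m)\<close> is the word of letters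
left behind. By right non-degeneracy, \<open>y \<mapsto> x'\<close> is a surjective, hence injective, self-map
of the finite set \<open>X\<close>; so the first letter of \<open>f\<^sub>x(w)\<close> determines \<open>y\<^sub>2\<close>, therefore also the
carried letter \<open>x''\<close>, and injectivity follows by induction on the length of the word.\<close>

fun sweep :: "(('a \<times> 'a) \<times> ('a \<times> 'a)) set \<Rightarrow> 'a \<Rightarrow> 'a list \<Rightarrow> 'a list" where
  "sweep R x [] = [x]"
| "sweep R x (y # ys) = fst (partner R (x, y)) # sweep R (snd (partner R (x, y))) ys"

lemma sweep_ne_Nil: "sweep R x ys \<noteq> []"
  by (cases ys) simp_all

lemma foldl_gstep_sweep:
  "foldl (\<lambda>w i. gstep R i w) (p @ x # ys) [Suc (length p)..<Suc (length p) + length ys]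
     = p @ sweep R x ys"
proof (induction ys arbitrary: p x)
  case Nil
  then show ?case by simp
next
  case (Cons y ys)
  obtain s t where st: "partner R (x, y) = (s, t)"
    by fastforce
  have indices: "[Suc (length p)..<Suc (length p) + length (y # ys)]
      = Suc (length p) # [Suc (length (p @ [s]))..<Suc (length (p @ [s])) + length ys]"
    by (simp add: upt_conv_Cons del: upt_Suc)
  have step: "gstep R (Suc (length p)) (p @ x # y # ys) = (p @ [s]) @ t # ys"
    using st by (simp add: gstep_def nth_append list_update_append)
  show ?case
    using Cons.IH[of "p @ [s]" t] st by (simp only: indices foldl_Cons step) simp
qed

lemma gmap_Cons: "gmap R (x # ys) = sweep R x ys"
  using foldl_gstep_sweep[of R "[]" x ys] by (simp add: gmap_def)

lemma fmap_eq_butlast_sweep: "fmap R x ys = butlast (sweep R x ys)"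
  by (simp add: fmap_def gmap_Cons)

lemma skew_type_ex1_partner:
  assumes "skew_type X R" "x \<in> X" "y \<in> X" "x \<noteq> y"
  shows "\<exists>!v. ((x, y), v) \<in> R \<or> (v, (x, y)) \<in> R"
proof -
  from assms(1) have "\<forall>p\<in>X. \<forall>q\<in>X. p \<noteq> q \<longrightarrow> (\<exists>!r\<in>R. fst r = (p, q) \<or> snd r = (p, q))"
    unfolding skew_type_def by (elim conjE)
  with assms(2-4) have "\<exists>!r\<in>R. fst r = (x, y) \<or> snd r = (x, y)"
    by blast
  then obtain r where r: "r \<in> R" "fst r = (x, y) \<or> snd r = (x, y)"
    and r_unique: "\<And>r'. r' \<in> R \<Longrightarrow> fst r' = (x, y) \<or> snd r' = (x, y) \<Longrightarrow> r' = r"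
    by blast
  show ?thesis
  proof (rule ex1I)
    show "((x, y), if fst r = (x, y) then snd r else fst r) \<in> R
        \<or> (if fst r = (x, y) then snd r else fst r, (x, y)) \<in> R"
      using r by (cases r) auto
  next
    fix v
    assume "((x, y), v) \<in> R \<or> (v, (x, y)) \<in> R"
    then show "v = (if fst r = (x, y) then snd r else fst r)"
      using r_unique by fastforce
  qed
qed

lemma skew_type_partner_mem:
  assumes "skew_type X R" "x \<in> X" "y \<in> X"
  shows "partner R (x, y) \<in> X \<times> X"
proof (cases "x = y")
  case True
  then show ?thesis
    using assms by (simp add: partner_def)
next
  case False
  let ?v = "partner R (x, y)"
  have "((x, y), ?v) \<in> R \<or> (?v, (x, y)) \<in> R"
    using theI'[OF skew_type_ex1_partner[OF assms False]] False by (simp add: partner_def)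
  moreover have "\<forall>((i, j), (k, l))\<in>R. i \<in> X \<and> j \<in> X \<and> k \<in> X \<and> l \<in> X"
    using assms(1) unfolding skew_type_def by fast
  ultimately show ?thesis
    by fastforce
qed

lemma right_nondegenerate_inj_on_fst_partner:
  assumes "skew_type X R" "right_nondegenerate X R" "x \<in> X"
  shows "inj_on (\<lambda>y. fst (partner R (x, y))) X"
proof (rule eq_card_imp_inj_on)
  show "finite X"
    using assms(1) by (simp add: skew_type_def)
  show "card ((\<lambda>y. fst (partner R (x, y))) ` X) = card X"
    using assms(2,3) by (simp add: right_nondegenerate_def)
qed

lemma butlast_sweep_inject:
  assumes "skew_type X R" "right_nondegenerate X R"
  shows "\<lbrakk>x \<in> X; set ys \<subseteq> X; set zs \<subseteq> X; length ys = length zs;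
      butlast (sweep R x ys) = butlast (sweep R x zs)\<rbrakk> \<Longrightarrow> ys = zs"
proof (induction ys arbitrary: x zs)
  case Nil
  then show ?case by simp
next
  case (Cons y ys)
  then obtain z zs' where zs: "zs = z # zs'"
    by (cases zs) auto
  from Cons.prems(5) have left: "fst (partner R (x, y)) = fst (partner R (x, z))"
    and carried: "butlast (sweep R (snd (partner R (x, y))) ys)
                  = butlast (sweep R (snd (partner R (x, z))) zs')"
    by (simp_all add: zs sweep_ne_Nil)
  have "y = z"
    using right_nondegenerate_inj_on_fst_partner[OF assms Cons.prems(1)] left Cons.prems zs
    by (auto dest: inj_onD)
  moreover have "snd (partner R (x, y)) \<in> X"
    using skew_type_partner_mem[OF assms(1) Cons.prems(1)] Cons.prems(2) by (simp add: mem_Times_iff)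
  ultimately have "ys = zs'"
    using Cons.IH carried Cons.prems zs by auto
  with \<open>y = z\<close> zs show ?case
    by simp
qed

theorem lemma4p1:
  fixes X :: "'a set" and R :: "(('a \<times> 'a) \<times> ('a \<times> 'a)) set"
  assumes "skew_type X R" and "right_nondegenerate X R"
    and "y1 \<in> X" and "(m::nat) \<ge> 2"
  shows "inj_on (fmap R y1) {ws. length ws = m - 1 \<and> set ws \<subseteq> X}"
proof (rule inj_onI)
  fix ws vs
  assume "ws \<in> {ws. length ws = m - 1 \<and> set ws \<subseteq> X}" "vs \<in> {ws. length ws = m - 1 \<and> set ws \<subseteq> X}"
    and "fmap R y1 ws = fmap R y1 vs"
  then show "ws = vs"
    using butlast_sweep_inject[OF assms(1-3)] by (simp add: fmap_eq_butlast_sweep)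
qed

end
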